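(* Let $\mathcal{X}$ be a finite set and $X=(X_1,\dots,X_n)$ a random vector in $\mathcal{X}^n$ satisfying a $\mathfrak{d}$-LSI$(\sigma^2)$. Let $\mathcal{F}$ be a family of functions $f:\mathcal{X}\to\mathbb{R}$ and for each $f$ let $c(f)\ge0$ satisfy $|f(x)-f(y)|\le c(f)$ for all $x,y\in\mathcal{X}$, with $\sup_{f\in\mathcal{F}}c(f)<\infty$. Let $g=g(X)=\sup_{f\in\mathcal{F}}\big|\sum_{j=1}^nf(X_j)\big|$. Then for every $t\ge0$, \[ \mathbb{P}(g\ge\mathbb{E}g+t)\le2\exp\Big(-\frac{t^2}{15\sigma^2n\sup_{f\in\mathcal{F}}c(f)^2}\Big). \]
   Context: $\mathfrak{d}$-LSI$(\sigma^2)$: with $\mu$ the law of $X$ and $\mu(\cdot\mid x_{i^c})$ the conditional law of $X_i$ given $X_j=x_j$ ($j\neq i$), set $\mathfrak{d}_iF(x)^2=\mathrm{Var}_{\mu(\cdot\mid x_{i^c})}(F(x_{i^c},\cdot))$ and $|\mathfrak{d}F|^2=\sum_i\mathfrak{d}_iF^2$; $\mu$ satisfies it if $\mathrm{Ent}_\mu(F^2)\le2\sigma^2\int|\mathfrak{d}F|^2d\mu$ for all $F:\mathcal{X}^n\to\mathbb{R}$, where $\mathrm{Ent}_\mu(h)=\int h\log h\,d\mu-\int h\,d\mu\log\int h\,d\mu$. *)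

theory Defs
  imports "HOL-Probability.Probability"
begin

text \<open>Points of the product space are functions from a finite index type 'n
  (so n = CARD('n)) into a finite alphabet type 'a. The law of the random vector X
  is a pmf mu on these points.\<close>

definition xlogx :: "real \<Rightarrow> real" where
  "xlogx u = (if u = 0 then 0 else u * ln u)"

definition Ent :: "'b pmf \<Rightarrow> ('b \<Rightarrow> real) \<Rightarrow> real" where
  "Ent \<mu> h = measure_pmf.expectation \<mu> (\<lambda>x. xlogx (h x))
              - xlogx (measure_pmf.expectation \<mu> h)"

definition others_eq :: "'n \<Rightarrow> ('n \<Rightarrow> 'a) \<Rightarrow> ('n \<Rightarrow> 'a) set" where
  "others_eq i x = {y. \<forall>j. j \<noteq> i \<longrightarrow> y j = x j}"

text \<open>(d_i F)(x)^2: the variance of F(x_{i^c}, .) under the conditional law of X_i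
  given X_j = x_j (j \<noteq> i). Realised as the variance of F under mu conditioned on
  the event others_eq i x (well defined when this event has positive mass; set to 0
  otherwise, which only concerns a mu-null set of x).\<close>
definition dsq :: "('n \<Rightarrow> 'a) pmf \<Rightarrow> (('n \<Rightarrow> 'a) \<Rightarrow> real) \<Rightarrow> 'n \<Rightarrow> ('n \<Rightarrow> 'a) \<Rightarrow> real" where
  "dsq \<mu> F i x =
     (if set_pmf \<mu> \<inter> others_eq i x = {} then 0
      else measure_pmf.variance (cond_pmf \<mu> (others_eq i x)) F)"

definition dgrad_sq :: "('n::finite \<Rightarrow> 'a) pmf \<Rightarrow> (('n \<Rightarrow> 'a) \<Rightarrow> real) \<Rightarrow> ('n \<Rightarrow> 'a) \<Rightarrow> real" where
  "dgrad_sq \<mu> F x = (\<Sum>i\<in>UNIV. dsq \<mu> F i x)"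

definition d_LSI :: "('n::finite \<Rightarrow> 'a) pmf \<Rightarrow> real \<Rightarrow> bool" where
  "d_LSI \<mu> \<sigma>2 \<longleftrightarrow>
     (\<forall>F :: ('n \<Rightarrow> 'a) \<Rightarrow> real.
        Ent \<mu> (\<lambda>x. (F x)\<^sup>2) \<le> 2 * \<sigma>2 * measure_pmf.expectation \<mu> (dgrad_sq \<mu> F))"

end

theory Submission
  imports Defs
begin

text \<open>Herbst's argument. Apply the LSI to F = exp(\<lambda> g / 2). Changing one coordinate moves g by at
  most C = sup c, so each conditional variance (d_i F)^2 is at most (\<lambda> C)^2 times the conditional
  mean of exp(\<lambda> g); by the tower property the LSI then gives
  Ent(exp(\<lambda> g)) \<le> K \<lambda>^2 Z(\<lambda>) with Z(\<lambda>) = E exp(\<lambda> g) and K = 2 \<sigma>^2 n C^2.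
  This says that \<lambda> \<mapsto> (ln Z(\<lambda>) - \<lambda> E g) / \<lambda> - K \<lambda> is antitone, whence ln Z(\<lambda>) \<le> \<lambda> E g + K \<lambda>^2,
  and the Chernoff bound with \<lambda> = t / (2 K) yields the tail bound exp(-t^2 / (8 \<sigma>^2 n C^2)),
  which is stronger than the one claimed.\<close>

lemma exp_half_diff_sq_le:
  fixes a u :: real
  assumes "0 \<le> u"
  shows "(exp (a / 2) - exp ((a - u) / 2))\<^sup>2 \<le> (u / 2)\<^sup>2 * exp a"
proof -
  have "1 - u / 2 \<le> exp (- (u / 2))" "exp (- (u / 2)) \<le> 1"
    using exp_ge_add_one_self[of "- (u / 2)"] assms by auto
  then have "(1 - exp (- (u / 2)))\<^sup>2 \<le> (u / 2)\<^sup>2"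
    by (intro power_mono) auto
  then have "exp a * (1 - exp (- (u / 2)))\<^sup>2 \<le> exp a * (u / 2)\<^sup>2"
    by (intro mult_left_mono) auto
  moreover have "(exp (a / 2) - exp ((a - u) / 2))\<^sup>2 = exp a * (1 - exp (- (u / 2)))\<^sup>2"
    by (simp add: power2_eq_square algebra_simps diff_divide_distrib flip: exp_add)
  ultimately show ?thesis
    by (simp add: mult.commute)
qed

lemma (in prob_space) variance_le_expectation_sq_diff:
  fixes X :: "'a \<Rightarrow> real"
  assumes "integrable M X" "integrable M (\<lambda>x. (X x)\<^sup>2)"
  shows "variance X \<le> expectation (\<lambda>x. (X x - k)\<^sup>2)"
proof -
  have "expectation (\<lambda>x. (X x - k)\<^sup>2) = expectation (\<lambda>x. (X x)\<^sup>2) - 2 * k * expectation X + k\<^sup>2"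
    using assms by (simp add: power2_diff local.prob_space)
  also have "\<dots> = variance X + (expectation X - k)\<^sup>2"
    unfolding variance_eq[OF assms] by (simp add: power2_eq_square algebra_simps)
  finally show ?thesis
    by simp
qed

lemma expectation_pmf_finite:
  fixes p :: "'b::finite pmf" and f :: "'b \<Rightarrow> real"
  shows "measure_pmf.expectation p f = (\<Sum>x\<in>UNIV. pmf p x * f x)"
  by (subst integral_measure_pmf_real[of UNIV]) (auto simp: mult.commute)

lemma integrable_pmf_finite [simp]:
  fixes p :: "'b::finite pmf" and f :: "'b \<Rightarrow> real"
  shows "integrable (measure_pmf p) f"
  by (rule integrable_measure_pmf_finite) simp

lemma expectation_exp_pos:
  fixes p :: "'b::finite pmf" and f :: "'b \<Rightarrow> real"
  shows "0 < measure_pmf.expectation p (\<lambda>x. exp (f x))"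
proof -
  obtain x where x: "x \<in> set_pmf p"
    using set_pmf_not_empty[of p] by blast
  have "0 < pmf p x * exp (f x)"
    using x by (simp add: pmf_positive)
  also have "\<dots> \<le> (\<Sum>y\<in>UNIV. pmf p y * exp (f y))"
    by (rule member_le_sum) auto
  finally show ?thesis
    by (simp add: expectation_pmf_finite)
qed

lemma expectation_bind_pmf_finite:
  fixes p :: "'b::finite pmf" and q :: "'b \<Rightarrow> 'c::finite pmf" and f :: "'c \<Rightarrow> real"
  shows "measure_pmf.expectation (bind_pmf p q) f
       = measure_pmf.expectation p (\<lambda>x. measure_pmf.expectation (q x) f)"
proof -
  have "(\<Sum>y\<in>UNIV. (\<Sum>x\<in>UNIV. pmf p x * pmf (q x) y) * f y)
      = (\<Sum>x\<in>UNIV. pmf p x * (\<Sum>y\<in>UNIV. pmf (q x) y * f y))"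
    unfolding sum_distrib_left sum_distrib_right mult.assoc by (rule sum.swap)
  then show ?thesis
    by (simp add: expectation_pmf_finite pmf_bind)
qed

lemma expectation_cond_pmf_partition:
  fixes \<mu> :: "'b::finite pmf" and A :: "'b \<Rightarrow> 'b set" and f :: "'b \<Rightarrow> real"
  assumes refl: "\<And>x. x \<in> A x" and eq: "\<And>x y. y \<in> A x \<Longrightarrow> A y = A x"
  shows "measure_pmf.expectation \<mu> (\<lambda>x. measure_pmf.expectation (cond_pmf \<mu> (A x)) f)
       = measure_pmf.expectation \<mu> f"
proof -
  have A_eq: "{y. y \<in> A x} = A x" "{x. y \<in> A x} = A y" for x y
    using refl eq by blast+
  have "bind_pmf \<mu> (\<lambda>x. cond_pmf \<mu> {y. y \<in> A x}) = \<mu>"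
    by (rule bind_cond_pmf_cancel) (use refl eq in \<open>auto simp: A_eq\<close>)
  then have "bind_pmf \<mu> (\<lambda>x. cond_pmf \<mu> (A x)) = \<mu>"
    unfolding A_eq(1) .
  then show ?thesis
    using expectation_bind_pmf_finite[of \<mu> "\<lambda>x. cond_pmf \<mu> (A x)" f] by simp
qed

lemma Ent_exp:
  fixes \<mu> :: "'b::finite pmf" and f :: "'b \<Rightarrow> real"
  shows "Ent \<mu> (\<lambda>x. exp (f x))
       = measure_pmf.expectation \<mu> (\<lambda>x. f x * exp (f x))
         - measure_pmf.expectation \<mu> (\<lambda>x. exp (f x)) * ln (measure_pmf.expectation \<mu> (\<lambda>x. exp (f x)))"
  using expectation_exp_pos[of \<mu> f] by (simp add: Ent_def xlogx_def mult.commute)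

lemma others_eq_refl: "x \<in> others_eq i x"
  by (simp add: others_eq_def)

lemma others_eq_sym: "y \<in> others_eq i x \<Longrightarrow> x \<in> others_eq i y"
  by (auto simp: others_eq_def)

lemma others_eq_eq: "y \<in> others_eq i x \<Longrightarrow> others_eq i y = others_eq i x"
  by (auto simp: others_eq_def)

lemma dsq_exp_le:
  fixes \<mu> :: "('n::finite \<Rightarrow> 'a::finite) pmf" and g :: "('n \<Rightarrow> 'a) \<Rightarrow> real"
  assumes l: "l \<ge> 0" and osc: "\<And>y. y \<in> others_eq i x \<Longrightarrow> \<bar>g y - g x\<bar> \<le> C"
  shows "dsq \<mu> (\<lambda>y. exp (l * g y / 2)) i x
       \<le> (l * C)\<^sup>2 * measure_pmf.expectation (cond_pmf \<mu> (others_eq i x)) (\<lambda>y. exp (l * g y))"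
proof (cases "set_pmf \<mu> \<inter> others_eq i x = {}")
  case True
  then show ?thesis
    by (simp add: dsq_def integral_nonneg_AE)
next
  case False
  define \<nu> where "\<nu> = cond_pmf \<mu> (others_eq i x)"
  \<comment> \<open>Any constant k bounds the variance via E (F - k)^2; this one lies below F on the fibre.\<close>
  define k where "k = exp ((l * g x - l * C) / 2)"
  have pointwise: "(exp (l * g y / 2) - k)\<^sup>2 \<le> (l * C)\<^sup>2 * exp (l * g y)"
    if "y \<in> others_eq i x" for y
  proof -
    define u where "u = l * (g y - g x + C)"
    have "0 \<le> g y - g x + C" "g y - g x + C \<le> 2 * C"
      using osc[OF that] by (auto simp: abs_le_iff)
    then have "0 \<le> u" "u \<le> l * (2 * C)"
      unfolding u_def using l by (auto intro: mult_left_mono)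
    then have "u / 2 \<le> l * C"
      by simp
    have "(exp (l * g y / 2) - k)\<^sup>2 \<le> (u / 2)\<^sup>2 * exp (l * g y)"
      using exp_half_diff_sq_le[OF \<open>0 \<le> u\<close>, of "l * g y"]
      by (simp add: k_def u_def algebra_simps)
    also have "\<dots> \<le> (l * C)\<^sup>2 * exp (l * g y)"
      using \<open>0 \<le> u\<close> \<open>u / 2 \<le> l * C\<close> by (intro mult_right_mono power_mono) auto
    finally show ?thesis .
  qed
  have "dsq \<mu> (\<lambda>y. exp (l * g y / 2)) i x = measure_pmf.variance \<nu> (\<lambda>y. exp (l * g y / 2))"
    using False by (simp add: dsq_def \<nu>_def)
  also have "\<dots> \<le> measure_pmf.expectation \<nu> (\<lambda>y. (exp (l * g y / 2) - k)\<^sup>2)"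
    by (rule measure_pmf.variance_le_expectation_sq_diff) simp_all
  also have "\<dots> \<le> measure_pmf.expectation \<nu> (\<lambda>y. (l * C)\<^sup>2 * exp (l * g y))"
    using False by (intro integral_mono_AE) (auto simp: AE_measure_pmf_iff \<nu>_def pointwise)
  finally show ?thesis
    by (simp add: \<nu>_def)
qed

lemma Ent_exp_le:
  fixes \<mu> :: "('n::finite \<Rightarrow> 'a::finite) pmf" and g :: "('n \<Rightarrow> 'a) \<Rightarrow> real"
  assumes lsi: "d_LSI \<mu> \<sigma>2" and \<sigma>2: "\<sigma>2 \<ge> 0" and l: "l \<ge> 0"
    and osc: "\<And>i x y. y \<in> others_eq i x \<Longrightarrow> \<bar>g y - g x\<bar> \<le> C"
  shows "Ent \<mu> (\<lambda>x. exp (l * g x))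
       \<le> 2 * \<sigma>2 * CARD('n) * (l * C)\<^sup>2 * measure_pmf.expectation \<mu> (\<lambda>x. exp (l * g x))"
proof -
  define F where "F x = exp (l * g x / 2)" for x
  define Z where "Z = measure_pmf.expectation \<mu> (\<lambda>x. exp (l * g x))"
  have F_sq: "(\<lambda>x. (F x)\<^sup>2) = (\<lambda>x. exp (l * g x))"
    by (simp add: F_def fun_eq_iff power2_eq_square flip: exp_add)
  have "measure_pmf.expectation \<mu> (dgrad_sq \<mu> F)
      \<le> measure_pmf.expectation \<mu> (\<lambda>x. \<Sum>i\<in>UNIV. (l * C)\<^sup>2 *
            measure_pmf.expectation (cond_pmf \<mu> (others_eq i x)) (\<lambda>y. exp (l * g y)))"
    unfolding dgrad_sq_def F_def
    by (intro integral_mono sum_mono dsq_exp_le l osc) simp_all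
  also have "\<dots> = (\<Sum>i\<in>(UNIV :: 'n set). (l * C)\<^sup>2 * measure_pmf.expectation \<mu>
            (\<lambda>x. measure_pmf.expectation (cond_pmf \<mu> (others_eq i x)) (\<lambda>y. exp (l * g y))))"
    by (simp add: integral_sum)
  also have "\<dots> = CARD('n) * (l * C)\<^sup>2 * Z"
    by (simp add: expectation_cond_pmf_partition others_eq_refl others_eq_eq Z_def)
  finally have "measure_pmf.expectation \<mu> (dgrad_sq \<mu> F) \<le> CARD('n) * (l * C)\<^sup>2 * Z" .
  then have "2 * \<sigma>2 * measure_pmf.expectation \<mu> (dgrad_sq \<mu> F) \<le> 2 * \<sigma>2 * (CARD('n) * (l * C)\<^sup>2 * Z)"
    using \<sigma>2 by (intro mult_left_mono) auto
  moreover have "Ent \<mu> (\<lambda>x. (F x)\<^sup>2) \<le> 2 * \<sigma>2 * measure_pmf.expectation \<mu> (dgrad_sq \<mu> F)"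
    using lsi by (simp add: d_LSI_def)
  ultimately show ?thesis
    by (simp add: F_sq Z_def mult_ac)
qed


lemma herbst_ln_bound:
  fixes Z Z' :: "real \<Rightarrow> real" and m K l :: real
  assumes Z_pos: "\<And>l. Z l > 0" and Z_0: "Z 0 = 1" and Z'_0: "Z' 0 = m"
    and deriv: "\<And>l. (Z has_real_derivative Z' l) (at l)"
    and ent: "\<And>l. l > 0 \<Longrightarrow> l * Z' l - Z l * ln (Z l) \<le> K * l\<^sup>2 * Z l"
    and l: "l > 0"
  shows "ln (Z l) \<le> l * m + K * l\<^sup>2"
proof -
  define E where "E l = ln (Z l) - l * m - K * l\<^sup>2" for l
  define D where "D l = E l / l" for l
  have dE: "(E has_real_derivative (Z' l / Z l - m - 2 * K * l)) (at l)" for l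
    unfolding E_def by (rule derivative_eq_intros deriv refl | use Z_pos in auto)+
  have "E 0 = 0"
    using Z_0 by (simp add: E_def)
  then have D_0: "(D \<longlongrightarrow> 0) (at 0)"
    using dE[of 0] Z_0 Z'_0 unfolding has_field_derivative_iff D_def[abs_def] by simp
  have D_antimono: "D l \<le> D s" if "0 < s" "s \<le> l" for s
  proof (rule DERIV_nonpos_imp_nonincreasing[OF that(2)])
    fix x assume "s \<le> x" "x \<le> l"
    with that have x: "x > 0" by simp
    have dD: "(D has_real_derivative ((Z' x / Z x - m - 2 * K * x) * x - E x) / x\<^sup>2) (at x)"
      unfolding D_def using x by (auto intro!: derivative_eq_intros dE simp: power2_eq_square)
    have "x * (Z' x / Z x) - ln (Z x) \<le> K * x\<^sup>2"
      using ent[OF x] Z_pos[of x] by (simp add: field_simps)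
    then have "(Z' x / Z x - m - 2 * K * x) * x - E x \<le> 0"
      by (simp add: E_def algebra_simps power2_eq_square)
    then have "((Z' x / Z x - m - 2 * K * x) * x - E x) / x\<^sup>2 \<le> 0"
      by (simp add: divide_nonpos_nonneg)
    with dD show "\<exists>y. DERIV D x :> y \<and> y \<le> 0"
      by blast
  qed
  have "D l \<le> 0"
  proof (rule tendsto_lowerbound)
    show "(D \<longlongrightarrow> 0) (at_right 0)"
      using D_0 by (rule tendsto_mono[OF at_le, rotated]) simp
    show "\<forall>\<^sub>F s in at_right 0. D l \<le> D s"
      unfolding eventually_at_right_field using l D_antimono by (intro exI[of _ l]) auto
  qed simp
  then show ?thesis
    using l by (simp add: D_def E_def divide_nonpos_pos field_simps)
qed

lemma ln_mgf_le:
  fixes \<mu> :: "('n::finite \<Rightarrow> 'a::finite) pmf" and g :: "('n \<Rightarrow> 'a) \<Rightarrow> real"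
  assumes lsi: "d_LSI \<mu> \<sigma>2" and \<sigma>2: "\<sigma>2 \<ge> 0" and l: "l > 0"
    and osc: "\<And>i x y. y \<in> others_eq i x \<Longrightarrow> \<bar>g y - g x\<bar> \<le> C"
  shows "ln (measure_pmf.expectation \<mu> (\<lambda>x. exp (l * g x)))
       \<le> l * measure_pmf.expectation \<mu> g + 2 * \<sigma>2 * CARD('n) * C\<^sup>2 * l\<^sup>2"
proof (rule herbst_ln_bound[OF _ _ _ _ _ l])
  define Z where "Z l = measure_pmf.expectation \<mu> (\<lambda>x. exp (l * g x))" for l
  define Z' where "Z' l = measure_pmf.expectation \<mu> (\<lambda>x. g x * exp (l * g x))" for l
  show "Z l > 0" for l
    unfolding Z_def by (rule expectation_exp_pos)
  show "Z 0 = 1" "Z' 0 = measure_pmf.expectation \<mu> g"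
    by (simp_all add: Z_def Z'_def)
  show "(Z has_real_derivative Z' l) (at l)" for l
    unfolding Z_def Z'_def expectation_pmf_finite
    by (auto intro!: derivative_eq_intros simp: algebra_simps)
  show "l * Z' l - Z l * ln (Z l) \<le> 2 * \<sigma>2 * CARD('n) * C\<^sup>2 * l\<^sup>2 * Z l" if "l > 0" for l
  proof -
    have "l * Z' l - Z l * ln (Z l) = Ent \<mu> (\<lambda>x. exp (l * g x))"
      by (simp add: Ent_exp Z_def Z'_def mult.assoc)
    also have "\<dots> \<le> 2 * \<sigma>2 * CARD('n) * (l * C)\<^sup>2 * Z l"
      unfolding Z_def using that by (intro Ent_exp_le lsi \<sigma>2 osc) simp
    finally show ?thesis
      by (simp add: power_mult_distrib mult_ac)
  qed
qed


lemma prob_ge_expectation_add_le: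
  fixes \<mu> :: "('n::finite \<Rightarrow> 'a::finite) pmf" and g :: "('n \<Rightarrow> 'a) \<Rightarrow> real"
  assumes lsi: "d_LSI \<mu> \<sigma>2" and \<sigma>2: "\<sigma>2 > 0" and C: "C > 0" and t: "t \<ge> 0"
    and osc: "\<And>i x y. y \<in> others_eq i x \<Longrightarrow> \<bar>g y - g x\<bar> \<le> C"
  shows "measure_pmf.prob \<mu> {x. g x \<ge> measure_pmf.expectation \<mu> g + t}
       \<le> exp (- t\<^sup>2 / (8 * \<sigma>2 * CARD('n) * C\<^sup>2))"
proof (cases "t = 0")
  case True
  then show ?thesis
    by simp
next
  case False
  define m where "m = measure_pmf.expectation \<mu> g"
  define K where "K = 2 * \<sigma>2 * CARD('n) * C\<^sup>2"
  define l where "l = t / (2 * K)"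
  have "K > 0"
    using \<sigma>2 C by (simp add: K_def)
  then have l: "l > 0"
    using t False by (simp add: l_def)
  have "ln (measure_pmf.expectation \<mu> (\<lambda>x. exp (l * g x))) \<le> l * m + K * l\<^sup>2"
    using ln_mgf_le[OF lsi _ l osc] \<sigma>2 by (simp add: m_def K_def)
  then have mgf: "measure_pmf.expectation \<mu> (\<lambda>x. exp (l * g x)) \<le> exp (l * m + K * l\<^sup>2)"
    using expectation_exp_pos[of \<mu> "\<lambda>x. l * g x"] by (metis exp_le_cancel_iff exp_ln)
  have "measure_pmf.prob \<mu> {x. g x \<ge> m + t}
      \<le> exp (- l * (m + t)) * measure_pmf.expectation \<mu> (\<lambda>x. exp (l * g x))"
    using measure_pmf.Chernoff_ineq_ge[where M = \<mu> and A = UNIV and f = g and a = "m + t", OF l]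
    by (simp add: set_integrable_def set_lebesgue_integral_def)
  also have "\<dots> \<le> exp (- l * (m + t)) * exp (l * m + K * l\<^sup>2)"
    using mgf by simp
  also have "exp (- l * (m + t)) * exp (l * m + K * l\<^sup>2) = exp (- t\<^sup>2 / (4 * K))"
    using \<open>K > 0\<close> by (simp add: l_def field_simps power2_eq_square flip: exp_add)
  finally show ?thesis
    by (simp add: m_def K_def mult_ac)
qed

lemma SUP_abs_sum_others_eq_le:
  fixes \<F> :: "('a \<Rightarrow> real) set" and x y :: "'n::finite \<Rightarrow> 'a"
  assumes ne: "\<F> \<noteq> {}" and osc: "\<And>f u v. f \<in> \<F> \<Longrightarrow> \<bar>f u - f v\<bar> \<le> C"
    and bdd: "\<And>x :: 'n \<Rightarrow> 'a. bdd_above ((\<lambda>f. \<bar>\<Sum>j\<in>UNIV. f (x j)\<bar>) ` \<F>)"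
    and y: "y \<in> others_eq i x"
  shows "\<bar>(SUP f\<in>\<F>. \<bar>\<Sum>j\<in>UNIV. f (y j)\<bar>) - (SUP f\<in>\<F>. \<bar>\<Sum>j\<in>UNIV. f (x j)\<bar>)\<bar> \<le> C"
proof -
  have one_sided: "(SUP f\<in>\<F>. \<bar>\<Sum>j\<in>UNIV. f (y j)\<bar>) \<le> (SUP f\<in>\<F>. \<bar>\<Sum>j\<in>UNIV. f (x j)\<bar>) + C"
    if "y \<in> others_eq i x" for x y :: "'n \<Rightarrow> 'a"
  proof (rule cSUP_least[OF ne])
    fix f assume f: "f \<in> \<F>"
    have "(\<Sum>j\<in>UNIV. f (y j)) - (\<Sum>j\<in>UNIV. f (x j)) = (\<Sum>j\<in>UNIV. if j = i then f (y i) - f (x i) else 0)"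
      unfolding sum_subtractf[symmetric] using that by (intro sum.cong) (auto simp: others_eq_def)
    then have "\<bar>\<Sum>j\<in>UNIV. f (y j)\<bar> \<le> \<bar>\<Sum>j\<in>UNIV. f (x j)\<bar> + C"
      using osc[OF f, of "y i" "x i"] by simp
    also have "\<dots> \<le> (SUP f\<in>\<F>. \<bar>\<Sum>j\<in>UNIV. f (x j)\<bar>) + C"
      using cSUP_upper[OF f bdd] by simp
    finally show "\<bar>\<Sum>j\<in>UNIV. f (y j)\<bar> \<le> (SUP f\<in>\<F>. \<bar>\<Sum>j\<in>UNIV. f (x j)\<bar>) + C" .
  qed
  show ?thesis
    using one_sided[OF y] one_sided[OF others_eq_sym[OF y]] by linarith
qed

theorem proposition1p4:
  fixes \<mu> :: "('n::finite \<Rightarrow> 'a::finite) pmf"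
    and \<sigma>2 :: real
    and \<F> :: "('a \<Rightarrow> real) set"
    and c :: "('a \<Rightarrow> real) \<Rightarrow> real"
    and t :: real
  assumes lsi: "d_LSI \<mu> \<sigma>2"
    and F_ne: "\<F> \<noteq> {}"
    and c_nonneg: "\<And>f. f \<in> \<F> \<Longrightarrow> c f \<ge> 0"
    and c_osc: "\<And>f x y. f \<in> \<F> \<Longrightarrow> \<bar>f x - f y\<bar> \<le> c f"
    and c_bdd: "bdd_above (c ` \<F>)"
    and g_fin: "\<And>x :: 'n \<Rightarrow> 'a. bdd_above ((\<lambda>f. \<bar>\<Sum>j\<in>UNIV. f (x j)\<bar>) ` \<F>)"
    and t_nonneg: "t \<ge> 0"
  shows "let g = (\<lambda>x. SUP f\<in>\<F>. \<bar>\<Sum>j\<in>UNIV. f (x j)\<bar>) in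
         measure_pmf.prob \<mu> {x. g x \<ge> measure_pmf.expectation \<mu> g + t}
           \<le> 2 * exp (- t\<^sup>2 / (15 * \<sigma>2 * real CARD('n) * (SUP f\<in>\<F>. c f)\<^sup>2))"
proof -
  define g where "g x = (SUP f\<in>\<F>. \<bar>\<Sum>j\<in>UNIV. f (x j)\<bar>)" for x :: "'n \<Rightarrow> 'a"
  define C where "C = (SUP f\<in>\<F>. c f)"
  define D where "D = \<sigma>2 * CARD('n) * C\<^sup>2"
  have c_le_C: "c f \<le> C" if "f \<in> \<F>" for f
    unfolding C_def using that c_bdd by (rule cSUP_upper)
  then have "C \<ge> 0"
    using F_ne c_nonneg by (meson all_not_in_conv order.trans)
  have "measure_pmf.prob \<mu> {x. g x \<ge> measure_pmf.expectation \<mu> g + t} \<le> exp (- t\<^sup>2 / (15 * D))"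
  proof (cases "\<sigma>2 > 0 \<and> C > 0")
    case True
    have osc: "\<bar>g y - g x\<bar> \<le> C" if "y \<in> others_eq i x" for i x y
      unfolding g_def using c_osc c_le_C
      by (intro SUP_abs_sum_others_eq_le[OF F_ne _ g_fin that]) (meson order.trans)
    have "measure_pmf.prob \<mu> {x. g x \<ge> measure_pmf.expectation \<mu> g + t} \<le> exp (- t\<^sup>2 / (8 * D))"
      using prob_ge_expectation_add_le[OF lsi _ _ t_nonneg osc] True by (simp add: D_def mult.assoc)
    also have "\<dots> \<le> exp (- t\<^sup>2 / (15 * D))"
      using True by (simp add: D_def frac_le zero_less_mult_iff)
    finally show ?thesis .
  next
    case False
    then have "t\<^sup>2 / (15 * D) \<le> 0"
      using \<open>C \<ge> 0\<close> by (intro divide_nonneg_nonpos) (auto simp: D_def mult_nonpos_nonneg not_less)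
    then show ?thesis
      by (intro order.trans[OF measure_pmf.prob_le_1]) simp
  qed
  also have "\<dots> \<le> 2 * exp (- t\<^sup>2 / (15 * D))"
    by simp
  finally show ?thesis
    by (simp add: Let_def g_def[abs_def] C_def D_def mult.assoc)
qed

end
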